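(* For $n\geq1$ let $\ell_n=\sqrt[n]{n!}$ and $x_n=\log(\ell_{n+1}/\ell_n)$. Then for every integer $n\geq 1$, $$x_n\geq \frac1n-\frac{\log n}{2n(n+1)}-\frac{\log(2\pi)}{2n(n+1)}-\frac{85}{144n^3}-\frac{49}{144n^4}\geq \frac1n-\frac{\log n}{2n(n+1)}-\frac{\log(2\pi)}{2n(n+1)}-\frac{1}{n^3}.$$
   Context: $\log$ denotes the natural logarithm. *)

theory Defs
  imports Complex_Main
begin

definition ell :: "nat \<Rightarrow> real" where
  "ell n = root n (fact n)"

definition xseq :: "nat \<Rightarrow> real" where
  "xseq n = ln (ell (n + 1) / ell n)"

end

theory Submission
  imports Defs "HOL-Analysis.Gamma_Function"
begin

text \<open>
  With \<open>\<delta>(n) = ln n! - (n + 1/2) ln n + n\<close>, the two elementary bounds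
  \<open>2t/(2+t) \<le> ln (1+t) \<le> (12t + 12t\<^sup>2 + t\<^sup>3)/(6(1+t)(2+t))\<close> make \<open>\<delta>\<close> decreasing and
  \<open>\<delta>(n) - 1/(12n)\<close> increasing; Wallis' product identifies the common limit as \<open>ln (2\<pi>)/2\<close>.
  This gives the Stirling bound \<open>ln n! \<le> (n + 1/2) ln n - n + ln (2\<pi>)/2 + 1/(12n)\<close>.
  Since \<open>x\<^sub>n = ln (n+1)/(n+1) - ln n!/(n(n+1))\<close>, inserting this bound and
  \<open>ln (n+1) \<ge> ln n + 2/(2n+1)\<close> leaves a gap that is a rational function of \<open>n\<close> with positive coefficients.
\<close>

lemma ln_add_one_ge:
  fixes x :: real
  assumes "x \<ge> 0"
  shows "2*x/(2+x) \<le> ln (1+x)"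
proof -
  let ?g = "\<lambda>t::real. ln (1+t) - 2*t/(2+t)"
  have "?g 0 \<le> ?g x"
  proof (rule DERIV_nonneg_imp_nondecreasing[OF assms])
    fix t :: real assume t: "0 \<le> t" "t \<le> x"
    have d: "DERIV ?g t :> (1/(1+t) - (2*(2+t) - 2*t)/(2+t)^2)"
      using t by (auto intro!: derivative_eq_intros simp: power2_eq_square)
    have p: "1+t > 0" "(2+t)^2 > 0" using t by auto
    have "1/(1+t) - (2*(2+t) - 2*t)/(2+t)^2 = t^2/((1+t)*(2+t)^2)"
      using p by (simp add: field_simps) (simp add: algebra_simps power2_eq_square)
    also have "\<dots> \<ge> 0" using p by simp
    finally show "\<exists>y. DERIV ?g t :> y \<and> y \<ge> 0" using d by auto
  qed
  then show ?thesis by simp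
qed

lemma ln_add_one_le:
  fixes x :: real
  assumes "x \<ge> 0"
  shows "ln (1+x) \<le> (12*x + 12*x^2 + x^3)/(6*(1+x)*(2+x))"
proof -
  let ?g = "\<lambda>t::real. ln (1+t) - (12*t + 12*t^2 + t^3)/(6*(1+t)*(2+t))"
  have "?g x \<le> ?g 0"
  proof (rule DERIV_nonpos_imp_nonincreasing[OF assms])
    fix t :: real assume t: "0 \<le> t" "t \<le> x"
    define P where "P = (12 + 24*t + 3*t^2)*(6*(1+t)*(2+t)) - (12*t + 12*t^2 + t^3)*(6*(2+t) + 6*(1+t))"
    define Q where "Q = 6*(1+t)*(2+t)"
    have d: "DERIV ?g t :> (1/(1+t) - P/Q^2)"
      using t unfolding P_def Q_def by (auto intro!: derivative_eq_intros simp: power2_eq_square)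
    have p: "1+t > 0" "Q^2 > 0" using t unfolding Q_def by auto
    have nonneg: "0 \<le> t^4 + t^5" using t by simp
    have "1/(1+t) - P/Q^2 = (Q^2 - P*(1+t))/((1+t)*Q^2)"
      using p by (simp add: field_simps)
    also have "Q^2 - P*(1+t) = -6*(t^4 + t^5)" unfolding P_def Q_def
      by (simp add: algebra_simps power2_eq_square power_def eval_nat_numeral)
    also have "-6*(t^4 + t^5)/((1+t)*Q^2) \<le> 0"
      using p nonneg by (intro divide_nonpos_pos) auto
    finally show "\<exists>y. DERIV ?g t :> y \<and> y \<le> 0" using d by auto
  qed
  then show ?thesis by simp
qed

lemma ln_one_plus_inverse:
  fixes x :: real
  assumes "x > 0"
  shows "ln (1 + 1/x) = ln (x+1) - ln x"
proof -
  have "1 + 1/x = (x+1)/x" using assms by (simp add: field_simps)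
  then show ?thesis using assms by (simp add: ln_div)
qed

lemma ln_diff_succ_ge:
  fixes x :: real
  assumes "x > 0"
  shows "ln x + 2/(2*x+1) \<le> ln (x+1)"
proof -
  have "2*(1/x)/(2 + 1/x) \<le> ln (1 + 1/x)" by (rule ln_add_one_ge) (use assms in simp)
  moreover have "2*(1/x)/(2 + 1/x) = 2/(2*x+1)" using assms by (simp add: field_simps)
  ultimately show ?thesis using ln_one_plus_inverse[OF assms] by simp
qed

lemma ln_diff_succ_le:
  fixes x :: real
  assumes "x > 0"
  shows "(x + 1/2) * (ln (x+1) - ln x) \<le> 1 + 1/(12*x) - 1/(12*(x+1))"
proof -
  define q r where "q = x + 1" and "r = 2*x + 1"
  have qr: "q > 0" "r > 0" using assms unfolding q_def r_def by auto
  have "ln (1 + 1/x) \<le> (12*(1/x) + 12*(1/x)^2 + (1/x)^3)/(6*(1 + 1/x)*(2 + 1/x))"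
    by (rule ln_add_one_le) (use assms in simp)
  also have "\<dots> = (12*x^2 + 12*x + 1)/(6*x*q*r)"
    using assms qr by (simp add: divide_simps) (simp add: q_def r_def algebra_simps power_def eval_nat_numeral)
  finally have "(x + 1/2) * (ln (x+1) - ln x) \<le> (x + 1/2) * ((12*x^2 + 12*x + 1)/(6*x*q*r))"
    using assms by (intro mult_left_mono) (simp_all add: ln_one_plus_inverse)
  also have "\<dots> = 1 + 1/(12*x) - 1/(12*q)"
    using assms qr by (simp add: field_simps) (simp add: q_def r_def algebra_simps power2_eq_square)
  finally show ?thesis unfolding q_def .
qed

lemma decseq_incseq_diff_convergent:
  fixes D e :: "nat \<Rightarrow> real"
  assumes "decseq D" and "incseq (\<lambda>n. D n - e n)" and "\<And>n. e n \<ge> 0" and "e \<longlonglongrightarrow> 0"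
  shows "convergent D"
proof -
  have "D n - e n \<le> D 0" for n
    using assms(3)[of n] decseqD[OF assms(1), of 0 n] by simp
  then obtain L where "(\<lambda>n. D n - e n) \<longlonglongrightarrow> L"
    using incseq_convergent[OF assms(2)] by blast
  then have "(\<lambda>n. (D n - e n) + e n) \<longlonglongrightarrow> L + 0"
    by (intro tendsto_add assms(4))
  then show ?thesis by (auto simp: convergent_def)
qed

lemma ln_fact_Suc: "ln (fact (Suc n) :: real) = ln (real n + 1) + ln (fact n)"
  by (simp add: ln_mult add.commute)

definition stirling_remainder :: "nat \<Rightarrow> real" where
  "stirling_remainder n = ln (fact n) - (real n + 1/2) * ln (real n) + real n"

lemma stirling_remainder_diff:
  "stirling_remainder n - stirling_remainder (Suc n)
     = (real n + 1/2) * (ln (real n + 1) - ln (real n)) - 1"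
  unfolding stirling_remainder_def ln_fact_Suc by (simp add: algebra_simps)

lemma decseq_stirling_remainder: "decseq (\<lambda>n. stirling_remainder (Suc n))"
proof (rule decseq_SucI)
  fix n
  define x where "x = real (Suc n)"
  have "x > 0" unfolding x_def by simp
  then have "1 \<le> (x + 1/2) * (ln (x+1) - ln x)"
    using ln_diff_succ_ge[of x] by (simp add: field_simps)
  then show "stirling_remainder (Suc (Suc n)) \<le> stirling_remainder (Suc n)"
    using stirling_remainder_diff[of "Suc n"] unfolding x_def by linarith
qed

lemma incseq_stirling_remainder_minus:
  "incseq (\<lambda>n. stirling_remainder (Suc n) - 1/(12 * real (Suc n)))"
proof (rule incseq_SucI)
  fix n
  define x where "x = real (Suc n)"
  have "(x + 1/2) * (ln (x+1) - ln x) \<le> 1 + 1/(12*x) - 1/(12*(x+1))"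
    by (rule ln_diff_succ_le) (simp add: x_def)
  then show "stirling_remainder (Suc n) - 1/(12 * real (Suc n))
      \<le> stirling_remainder (Suc (Suc n)) - 1/(12 * real (Suc (Suc n)))"
    using stirling_remainder_diff[of "Suc n"] unfolding x_def by (simp add: add.commute)
qed

lemma wallis_partial_product_eq:
  "(\<Prod>k=1..n. (4*real k^2) / (4*real k^2 - 1))
     = (2^n * fact n)^4 / ((fact (2*n))^2 * (2*real n + 1))"
proof (induction n)
  case 0
  then show ?case by simp
next
  case (Suc n)
  have "(\<Prod>k=1..Suc n. (4*real k^2) / (4*real k^2 - 1))
      = (2^n * fact n)^4 / ((fact (2*n))^2 * (2*real n + 1)) * (4*(real n + 1)^2 / ((2*real n + 1)*(2*real n + 3)))"
    using Suc by (simp add: algebra_simps power2_eq_square)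
  also have "\<dots> = (2*(2^n * fact n)*(real n + 1))^4 / (((2*real n + 2)*(2*real n + 1)*fact (2*n))^2 * (2*real n + 3))"
    by (simp add: divide_simps) (simp add: algebra_simps power2_eq_square power4_eq_xxxx)
  also have "\<dots> = (2^Suc n * fact (Suc n))^4 / ((fact (2*Suc n))^2 * (2*real (Suc n) + 1))"
    by (simp add: algebra_simps)
  finally show ?case .
qed

lemma ln_wallis_partial_product:
  assumes "n \<ge> 1"
  shows "ln (\<Prod>k=1..n. (4*real k^2) / (4*real k^2 - 1))
     = 4 * stirling_remainder n - 2 * stirling_remainder (2*n) - ln 2 - ln (2 + 1/real n)"
proof -
  have n: "real n > 0" using assms by simp
  have "ln (\<Prod>k=1..n. (4*real k^2) / (4*real k^2 - 1))
      = 4*(real n * ln 2 + ln (fact n)) - 2*ln (fact (2*n)) - ln (2*real n + 1)"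
    unfolding wallis_partial_product_eq using n by (simp add: ln_div ln_mult ln_realpow)
  also have "2*real n + 1 = (2 + 1/real n) * real n"
    using n by (simp add: field_simps)
  also have "ln \<dots> = ln (2 + 1/real n) + ln (real n)"
    using n by (intro ln_mult_pos add_pos_pos) auto
  finally show ?thesis
    using n by (simp add: stirling_remainder_def ln_mult algebra_simps)
qed

lemma LIMSEQ_one_over_12_Suc: "(\<lambda>n. 1/(12 * real (Suc n))) \<longlonglongrightarrow> 0"
  using LIMSEQ_Suc[OF lim_const_over_n[of "1/12 :: real"]] by simp

lemma stirling_remainder_tendsto: "stirling_remainder \<longlonglongrightarrow> ln (2*pi)/2"
proof -
  have "convergent (\<lambda>n. stirling_remainder (Suc n))"
    by (rule decseq_incseq_diff_convergent[OF decseq_stirling_remainder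
          incseq_stirling_remainder_minus _ LIMSEQ_one_over_12_Suc]) simp
  then obtain L where lim: "stirling_remainder \<longlonglongrightarrow> L"
    by (auto simp: convergent_def intro: LIMSEQ_imp_Suc)
  have "(\<lambda>n. stirling_remainder (2*n)) \<longlonglongrightarrow> L"
    using LIMSEQ_subseq_LIMSEQ[OF lim, of "\<lambda>n. 2*n"] by (simp add: strict_mono_def o_def)
  then have "(\<lambda>n. 4 * stirling_remainder n - 2 * stirling_remainder (2*n) - ln 2 - ln (2 + 1/real n))
      \<longlonglongrightarrow> 4*L - 2*L - ln 2 - ln (2 + 0)"
    by (intro tendsto_diff tendsto_mult_left tendsto_ln tendsto_add tendsto_const lim lim_1_over_n) simp_all
  moreover have "\<forall>\<^sub>F n in sequentially. 4 * stirling_remainder n - 2 * stirling_remainder (2*n)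
      - ln 2 - ln (2 + 1/real n) = ln (\<Prod>k=1..n. (4*real k^2) / (4*real k^2 - 1))"
    using eventually_ge_at_top[of 1] by eventually_elim (rule ln_wallis_partial_product[symmetric])
  ultimately have "(\<lambda>n. ln (\<Prod>k=1..n. (4*real k^2) / (4*real k^2 - 1))) \<longlonglongrightarrow> 2*L - 2 * ln 2"
    by (simp add: Lim_transform_eventually)
  moreover have "(\<lambda>n. ln (\<Prod>k=1..n. (4*real k^2) / (4*real k^2 - 1))) \<longlonglongrightarrow> ln (pi/2)"
    by (intro tendsto_ln wallis) simp
  ultimately have "ln (pi/2) = 2*L - 2 * ln 2"
    using LIMSEQ_unique by blast
  then have L: "L = ln (2*pi)/2"
    using pi_gt_zero by (simp add: ln_div ln_mult)
  show ?thesis using lim unfolding L .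
qed

lemma ln_fact_le_stirling:
  assumes "n \<ge> 1"
  shows "ln (fact n) \<le> (real n + 1/2) * ln (real n) - real n + ln (2*pi)/2 + 1/(12 * real n)"
proof -
  have "(\<lambda>n. stirling_remainder (Suc n) - 1/(12 * real (Suc n))) \<longlonglongrightarrow> ln (2*pi)/2 - 0"
    by (intro tendsto_diff LIMSEQ_Suc stirling_remainder_tendsto LIMSEQ_one_over_12_Suc)
  from incseq_le[OF incseq_stirling_remainder_minus this, of "n - 1"]
  show ?thesis using assms by (simp add: stirling_remainder_def)
qed

lemma xseq_eq:
  assumes "n \<ge> 1"
  shows "xseq n = ln (real n + 1)/(real n + 1) - ln (fact n)/(real n * (real n + 1))"
proof -
  have "xseq n = ln (fact (Suc n))/real (Suc n) - ln (fact n)/real n"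
    unfolding xseq_def ell_def using assms by (simp add: ln_div ln_root)
  also have "\<dots> = (ln (real n + 1) + ln (fact n))/(real n + 1) - ln (fact n)/real n"
    unfolding ln_fact_Suc by (simp add: add.commute)
  also have "\<dots> = ln (real n + 1)/(real n + 1) - ln (fact n)/(real n * (real n + 1))"
  proof -
    define q where "q = real n + 1"
    have "real n > 0" "q > 0" using assms unfolding q_def by auto
    then have "(ln q + ln (fact n))/q - ln (fact n)/real n = ln q/q - ln (fact n)/(real n * q)"
      by (simp add: field_simps) (simp add: q_def algebra_simps)
    then show ?thesis unfolding q_def .
  qed
  finally show ?thesis .
qed

lemma stirling_gap_eq:
  fixes m a c :: real
  assumes "m > 0"
  shows "(a + 2/(2*m+1))/(m+1) - ((m + 1/2)*a - m + c/2 + 1/(12*m))/(m*(m+1))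
       - (1/m - a/(2*m*(m+1)) - c/(2*m*(m+1)) - 85/(144*m^3) - 49/(144*m^4))
     = (2*m^3 + 341*m^2 + 232*m + 49)/(144*m^4*(m+1)*(2*m+1))"
proof -
  define q r where "q = m + 1" and "r = 2*m + 1"
  have "q > 0" "r > 0" using assms unfolding q_def r_def by auto
  then have "(a + 2/r)/q - ((m + 1/2)*a - m + c/2 + 1/(12*m))/(m*q)
       - (1/m - a/(2*m*q) - c/(2*m*q) - 85/(144*m^3) - 49/(144*m^4))
     = (2*m^3 + 341*m^2 + 232*m + 49)/(144*m^4*q*r)"
    using assms by (simp add: field_simps) (simp add: q_def r_def algebra_simps power_def eval_nat_numeral)
  then show ?thesis unfolding q_def r_def .
qed

lemma quartic_le_cubic:
  fixes m :: real
  assumes "m \<ge> 1"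
  shows "85/(144*m^3) + 49/(144*m^4) \<le> 1/m^3"
proof -
  have "49/(144*m^4) \<le> 49/(144*m^3)"
    using assms by (intro divide_left_mono mult_left_mono power_increasing) auto
  moreover have "85/(144*m^3) + 49/(144*m^3) \<le> 1/m^3"
    using assms by (simp add: field_simps)
  ultimately show ?thesis by linarith
qed

theorem mainTheorem7:
  fixes n :: nat
  assumes "n \<ge> 1"
  shows "xseq n \<ge> 1 / real n - ln (real n) / (2 * real n * (real n + 1))
            - ln (2 * pi) / (2 * real n * (real n + 1))
            - 85 / (144 * real n ^ 3) - 49 / (144 * real n ^ 4)
       \<and> 1 / real n - ln (real n) / (2 * real n * (real n + 1))
            - ln (2 * pi) / (2 * real n * (real n + 1))
            - 85 / (144 * real n ^ 3) - 49 / (144 * real n ^ 4)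
         \<ge> 1 / real n - ln (real n) / (2 * real n * (real n + 1))
            - ln (2 * pi) / (2 * real n * (real n + 1)) - 1 / real n ^ 3"
proof -
  define m where "m = real n"
  have m: "m > 0" "m \<ge> 1" using assms unfolding m_def by auto
  have "(ln m + 2/(2*m+1))/(m+1) - ((m + 1/2)*ln m - m + ln (2*pi)/2 + 1/(12*m))/(m*(m+1))
      \<le> ln (m+1)/(m+1) - ln (fact n)/(m*(m+1))"
    using ln_diff_succ_ge[OF m(1)] ln_fact_le_stirling[OF assms] m
    unfolding m_def by (intro diff_mono divide_right_mono) auto
  also have "\<dots> = xseq n" unfolding m_def by (rule xseq_eq[OF assms, symmetric])
  finally have lower: "(ln m + 2/(2*m+1))/(m+1) - ((m + 1/2)*ln m - m + ln (2*pi)/2 + 1/(12*m))/(m*(m+1))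
      \<le> xseq n" .
  have "0 \<le> (2*m^3 + 341*m^2 + 232*m + 49)/(144*m^4*(m+1)*(2*m+1))"
    using m by simp
  then have "1/m - ln m/(2*m*(m+1)) - ln (2*pi)/(2*m*(m+1)) - 85/(144*m^3) - 49/(144*m^4) \<le> xseq n"
    using lower stirling_gap_eq[OF m(1), of "ln m" "ln (2*pi)"] by linarith
  with quartic_le_cubic[OF m(2)] show ?thesis unfolding m_def by simp
qed

end
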